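(* Let $(V,L,\varphi,E)$ be a valuation system such that $\varphi$ is $\Pi$-extendible. Then the valuation system $(V,\Pi L,\Pi\varphi,E)$ is $\Pi$-complete.
   Context: A valuation system $(V,L,\varphi,E)$ consists of: (i) a lattice $V$ which is $\sigma$-distributive, i.e. for every $a\in V$ and every sequence $(b_n)$ in $V$ whose infimum exists, $\bigwedge_n(a\vee b_n)$ exists and equals $a\vee\bigwedge_n b_n$, and dually for suprema; (ii) a sublattice $L$ of $V$; (iii) a partially ordered abelian group $E$ which is R-complete: whenever $x_1\ge x_2\ge\cdots$ and $y_1\ge y_2\ge\cdots$ in $E$ are such that $\bigwedge_n(x_n+y_n)$ exists, then $\bigwedge_n x_n$ and $\bigwedge_n y_n$ exist, and dually for increasing sequences and suprema; (iv) a valuation $\varphi:L\to E$, i.e. an order-preserving map with $\varphi(a\wedge b)+\varphi(a\vee b)=\varphi(a)+\varphi(b)$. A decreasing sequence $a_1\ge a_2\ge\cdots$ in $L$ is $\varphi$-convergent if $\bigwedge_n a_n$ exists in $V$ and $\bigwedge_n\varphi(a_n)$ exists in $E$. The system is $\Pi$-complete if for every $\varphi$-convergent decreasing sequence $(a_n)$ in $L$ we have $\bigwedge_n a_n\in L$ and $\varphi(\bigwedge_n a_n)=\bigwedge_n\varphi(a_n)$. Let $\Pi L:=\{\bigwedge_n a_n: (a_n)\text{ a }\varphi\text{-convergent decreasing sequence in }L\}$; this is a sublattice of $V$ containing $L$. $\varphi$ is $\Pi$-extendible if there is a valuation $\psi:\Pi L\to E$ with $\psi(\bigwedge_n a_n)=\bigwedge_n\varphi(a_n)$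 for every $\varphi$-convergent decreasing sequence $(a_n)$ in $L$; this $\psi$ is then unique and denoted $\Pi\varphi$. *)

theory Defs
  imports Main
begin

definition is_glb :: "'a::order set \<Rightarrow> 'a \<Rightarrow> bool" where
  "is_glb S x \<longleftrightarrow> (\<forall>s\<in>S. x \<le> s) \<and> (\<forall>y. (\<forall>s\<in>S. y \<le> s) \<longrightarrow> y \<le> x)"

definition is_lub :: "'a::order set \<Rightarrow> 'a \<Rightarrow> bool" where
  "is_lub S x \<longleftrightarrow> (\<forall>s\<in>S. s \<le> x) \<and> (\<forall>y. (\<forall>s\<in>S. s \<le> y) \<longrightarrow> x \<le> y)"

definition Glb :: "'a::order set \<Rightarrow> 'a" where
  "Glb S = (THE x. is_glb S x)"

text \<open>(i) sigma-distributivity of the lattice V (modelled as the whole type 'v).\<close>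

definition sigma_distributive :: "'v::lattice itself \<Rightarrow> bool" where
  "sigma_distributive (t::'v itself) \<longleftrightarrow>
     (\<forall>(a::'v) (b::nat\<Rightarrow>'v) x. is_glb (range b) x \<longrightarrow> is_glb (range (\<lambda>n. sup a (b n))) (sup a x)) \<and>
     (\<forall>(a::'v) (b::nat\<Rightarrow>'v) x. is_lub (range b) x \<longrightarrow> is_lub (range (\<lambda>n. inf a (b n))) (inf a x))"

definition sublattice :: "'v::lattice set \<Rightarrow> bool" where
  "sublattice L \<longleftrightarrow> (\<forall>a\<in>L. \<forall>b\<in>L. inf a b \<in> L \<and> sup a b \<in> L)"

text \<open>(iii) R-completeness of the partially ordered abelian group E (the whole type 'e).\<close>

definition R_complete :: "'e::ordered_ab_group_add itself \<Rightarrow> bool" where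
  "R_complete (t::'e itself) \<longleftrightarrow>
     (\<forall>(x::nat\<Rightarrow>'e) y. antimono x \<longrightarrow> antimono y \<longrightarrow> (\<exists>z. is_glb (range (\<lambda>n. x n + y n)) z) \<longrightarrow>
        (\<exists>u. is_glb (range x) u) \<and> (\<exists>v. is_glb (range y) v)) \<and>
     (\<forall>(x::nat\<Rightarrow>'e) y. mono x \<longrightarrow> mono y \<longrightarrow> (\<exists>z. is_lub (range (\<lambda>n. x n + y n)) z) \<longrightarrow>
        (\<exists>u. is_lub (range x) u) \<and> (\<exists>v. is_lub (range y) v))"

definition valuation :: "'v::lattice set \<Rightarrow> ('v \<Rightarrow> 'e::ordered_ab_group_add) \<Rightarrow> bool" where
  "valuation L \<phi> \<longleftrightarrow>
     (\<forall>a\<in>L. \<forall>b\<in>L. a \<le> b \<longrightarrow> \<phi> a \<le> \<phi> b) \<and>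
     (\<forall>a\<in>L. \<forall>b\<in>L. \<phi> (inf a b) + \<phi> (sup a b) = \<phi> a + \<phi> b)"

definition valuation_system :: "'v::lattice set \<Rightarrow> ('v \<Rightarrow> 'e::ordered_ab_group_add) \<Rightarrow> bool" where
  "valuation_system L \<phi> \<longleftrightarrow>
     sigma_distributive TYPE('v) \<and> sublattice L \<and> R_complete TYPE('e) \<and> valuation L \<phi>"

definition phi_convergent :: "'v::lattice set \<Rightarrow> ('v \<Rightarrow> 'e::ordered_ab_group_add) \<Rightarrow> (nat \<Rightarrow> 'v) \<Rightarrow> bool" where
  "phi_convergent L \<phi> a \<longleftrightarrow>
     (\<forall>n. a n \<in> L) \<and> antimono a \<and> (\<exists>x. is_glb (range a) x) \<and> (\<exists>y. is_glb (range (\<lambda>n. \<phi> (a n))) y)"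

definition Pi_complete :: "'v::lattice set \<Rightarrow> ('v \<Rightarrow> 'e::ordered_ab_group_add) \<Rightarrow> bool" where
  "Pi_complete L \<phi> \<longleftrightarrow>
     (\<forall>a. phi_convergent L \<phi> a \<longrightarrow>
        Glb (range a) \<in> L \<and> \<phi> (Glb (range a)) = Glb (range (\<lambda>n. \<phi> (a n))))"

definition PiL :: "'v::lattice set \<Rightarrow> ('v \<Rightarrow> 'e::ordered_ab_group_add) \<Rightarrow> 'v set" where
  "PiL L \<phi> = {Glb (range a) | a. phi_convergent L \<phi> a}"

definition Pi_ext_prop :: "'v::lattice set \<Rightarrow> ('v \<Rightarrow> 'e::ordered_ab_group_add) \<Rightarrow> ('v \<Rightarrow> 'e) \<Rightarrow> bool" where
  "Pi_ext_prop L \<phi> \<psi> \<longleftrightarrow> valuation (PiL L \<phi>) \<psi> \<and>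
     (\<forall>a. phi_convergent L \<phi> a \<longrightarrow> \<psi> (Glb (range a)) = Glb (range (\<lambda>n. \<phi> (a n))))"

definition Pi_extendible :: "'v::lattice set \<Rightarrow> ('v \<Rightarrow> 'e::ordered_ab_group_add) \<Rightarrow> bool" where
  "Pi_extendible L \<phi> \<longleftrightarrow> (\<exists>\<psi>. Pi_ext_prop L \<phi> \<psi>)"

text \<open>Pi phi: the (on PiL unique) extension; values outside PiL are irrelevant.\<close>

definition Pi_phi :: "'v::lattice set \<Rightarrow> ('v \<Rightarrow> 'e::ordered_ab_group_add) \<Rightarrow> 'v \<Rightarrow> 'e" where
  "Pi_phi L \<phi> = (SOME \<psi>. Pi_ext_prop L \<phi> \<psi>)"

end

theory Submission
  imports Defs
begin

text \<open>\<open>\<Pi>L\<close> is a sublattice because infima and suprema of \<open>\<phi>\<close>-convergent sequences can be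
taken termwise: \<open>\<sigma>\<close>-distributivity handles the suprema, modularity of \<open>\<phi>\<close> together with
R-completeness of \<open>E\<close> gives convergence of the valuations. For \<open>\<Pi>\<close>-completeness, let
\<open>c\<^sub>n = \<And>\<^sub>k A\<^sub>n\<^sub>k\<close> be a decreasing sequence in \<open>\<Pi>L\<close>. The diagonal
\<open>d\<^sub>k = A\<^sub>0\<^sub>k \<and> \<dots> \<and> A\<^sub>k\<^sub>k\<close> lies in \<open>L\<close>, is squeezed between \<open>c\<^sub>k\<close> and the columns
\<open>A\<^sub>n\<close>, and therefore has the same infimum as \<open>c\<close>; monotonicity of \<open>\<Pi>\<phi>\<close> squeezes
\<open>\<phi>(d\<^sub>k)\<close> in the same way, so \<open>\<And>\<^sub>k d\<^sub>k\<close> is the limit of a \<open>\<phi>\<close>-convergent sequence in \<open>L\<close>.\<close>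

lemma is_glb_unique: "is_glb S x \<Longrightarrow> is_glb S y \<Longrightarrow> x = y"
  unfolding is_glb_def by (meson order.antisym)

lemma Glb_eqI: "is_glb S x \<Longrightarrow> Glb S = x"
  unfolding Glb_def by (rule the_equality) (auto intro: is_glb_unique)

lemma is_glb_singleton: "is_glb {x} x"
  unfolding is_glb_def by auto

lemma is_glb_squeeze:
  assumes glb_A: "\<And>n. is_glb (range (A n)) (c n)"
    and glb_c: "is_glb (range c) x"
    and above: "\<And>k. c k \<le> d k"
    and below: "\<And>n k. \<exists>m. d m \<le> A n k"
  shows "is_glb (range d) x"
  unfolding is_glb_def
proof safe
  fix k show "x \<le> d k"
    using glb_c above[of k] unfolding is_glb_def by (meson order.trans rangeI)
next
  fix z assume z: "\<forall>s\<in>range d. z \<le> s"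
  have "z \<le> c n" for n
  proof -
    have "z \<le> A n k" for k
      using z below[of n k] by (meson order.trans rangeI)
    then show ?thesis using glb_A[of n] unfolding is_glb_def by auto
  qed
  then show "z \<le> x" using glb_c unfolding is_glb_def by auto
qed

lemma is_glb_add:
  fixes x y :: "nat \<Rightarrow> 'e::ordered_ab_group_add"
  assumes "antimono x" "antimono y" and glb_x: "is_glb (range x) u" and glb_y: "is_glb (range y) v"
  shows "is_glb (range (\<lambda>n. x n + y n)) (u + v)"
  unfolding is_glb_def
proof safe
  fix n show "u + v \<le> x n + y n"
    using glb_x glb_y unfolding is_glb_def by (simp add: add_mono)
next
  fix z assume z: "\<forall>s\<in>range (\<lambda>n. x n + y n). z \<le> s"
  have "z - v \<le> x m" for m
  proof -
    have "z - x m \<le> y n" for n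
    proof -
      have "z \<le> x (max m n) + y (max m n)" using z by auto
      also have "\<dots> \<le> x m + y n" using assms(1,2) by (intro add_mono; auto intro: antimonoD)
      finally show ?thesis by (simp add: diff_le_eq add.commute)
    qed
    then have "z - x m \<le> v" using glb_y unfolding is_glb_def by auto
    then show ?thesis by (simp add: diff_le_eq le_diff_eq add.commute)
  qed
  then have "z - v \<le> u" using glb_x unfolding is_glb_def by auto
  then show "z \<le> u + v" by (simp add: diff_le_eq)
qed

lemma is_glb_inf:
  fixes a b :: "nat \<Rightarrow> 'v::lattice"
  assumes "is_glb (range a) x" "is_glb (range b) y"
  shows "is_glb (range (\<lambda>n. inf (a n) (b n))) (inf x y)"
  using assms unfolding is_glb_def by (auto intro: le_infI1 le_infI2)

lemma is_glb_sup:
  fixes a b :: "nat \<Rightarrow> 'v::lattice"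
  assumes distr: "sigma_distributive TYPE('v)" and "antimono a" "antimono b"
    and glb_a: "is_glb (range a) x" and glb_b: "is_glb (range b) y"
  shows "is_glb (range (\<lambda>n. sup (a n) (b n))) (sup x y)"
  unfolding is_glb_def
proof safe
  fix n show "sup x y \<le> sup (a n) (b n)"
    using glb_a glb_b unfolding is_glb_def by (simp add: sup.coboundedI1 sup.coboundedI2)
next
  fix z assume z: "\<forall>s\<in>range (\<lambda>n. sup (a n) (b n)). z \<le> s"
  have distr_b: "is_glb (range (\<lambda>n. sup (a m) (b n))) (sup (a m) y)" for m
    using distr glb_b unfolding sigma_distributive_def by blast
  have distr_a: "is_glb (range (\<lambda>n. sup y (a n))) (sup y x)"
    using distr glb_a unfolding sigma_distributive_def by blast
  have "z \<le> sup y (a m)" for m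
  proof -
    have "z \<le> sup (a m) (b n)" for n
    proof -
      have "z \<le> sup (a (max m n)) (b (max m n))" using z by auto
      also have "\<dots> \<le> sup (a m) (b n)" using assms(2,3) by (intro sup_mono; auto intro: antimonoD)
      finally show ?thesis .
    qed
    then have "z \<le> sup (a m) y" using distr_b[of m] unfolding is_glb_def by auto
    then show ?thesis by (simp add: sup_commute)
  qed
  then have "z \<le> sup y x" using distr_a unfolding is_glb_def by auto
  then show "z \<le> sup x y" by (simp add: sup_commute)
qed

lemma phi_convergent_is_glb:
  assumes "phi_convergent L \<phi> a"
  shows "is_glb (range a) (Glb (range a))"
    and "is_glb (range (\<lambda>n. \<phi> (a n))) (Glb (range (\<lambda>n. \<phi> (a n))))"
  using assms unfolding phi_convergent_def by (metis Glb_eqI)+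

lemma phi_convergent_const: "a \<in> L \<Longrightarrow> phi_convergent L \<phi> (\<lambda>_. a)"
  unfolding phi_convergent_def by (auto simp: antimono_def intro: is_glb_singleton)

lemma mem_PiL_iff: "x \<in> PiL L \<phi> \<longleftrightarrow> (\<exists>a. phi_convergent L \<phi> a \<and> is_glb (range a) x)"
  unfolding PiL_def using phi_convergent_is_glb(1) Glb_eqI by blast

lemma subset_PiL: "L \<subseteq> PiL L \<phi>"
  by (auto simp: mem_PiL_iff intro!: exI[of _ "\<lambda>_. _"] phi_convergent_const is_glb_singleton)

lemma sublattice_PiL:
  fixes L :: "'v::lattice set" and \<phi> :: "'v \<Rightarrow> 'e::ordered_ab_group_add"
  assumes "valuation_system L \<phi>"
  shows "sublattice (PiL L \<phi>)"
  unfolding sublattice_def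
proof (intro ballI conjI)
  fix p q assume "p \<in> PiL L \<phi>" "q \<in> PiL L \<phi>"
  then obtain a b where conv: "phi_convergent L \<phi> a" "phi_convergent L \<phi> b"
    and glb: "is_glb (range a) p" "is_glb (range b) q"
    by (auto simp: mem_PiL_iff)
  have distr: "sigma_distributive TYPE('v)" and sub: "sublattice L"
    and R: "R_complete TYPE('e)" and val: "valuation L \<phi>"
    using assms unfolding valuation_system_def by auto
  have in_L: "a n \<in> L" "b n \<in> L" and anti: "antimono a" "antimono b" for n
    using conv unfolding phi_convergent_def by auto
  have mono_phi: "\<And>x y. x \<in> L \<Longrightarrow> y \<in> L \<Longrightarrow> x \<le> y \<Longrightarrow> \<phi> x \<le> \<phi> y"
    and modular: "\<And>x y. x \<in> L \<Longrightarrow> y \<in> L \<Longrightarrow> \<phi> (inf x y) + \<phi> (sup x y) = \<phi> x + \<phi> y"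
    using val unfolding valuation_def by auto
  define i where "i = (\<lambda>n. inf (a n) (b n))"
  define s where "s = (\<lambda>n. sup (a n) (b n))"
  have is_L: "i n \<in> L" "s n \<in> L" for n
    using sub in_L unfolding sublattice_def i_def s_def by auto
  have is_anti: "antimono i" "antimono s"
    unfolding i_def s_def using anti
    by (auto simp: antimono_def intro: le_infI1 le_infI2 le_supI1 le_supI2)
  have "antimono (\<lambda>n. \<phi> (a n))" "antimono (\<lambda>n. \<phi> (b n))"
    using in_L anti mono_phi unfolding antimono_def by auto
  then have "is_glb (range (\<lambda>n. \<phi> (a n) + \<phi> (b n)))
      (Glb (range (\<lambda>n. \<phi> (a n))) + Glb (range (\<lambda>n. \<phi> (b n))))"
    using phi_convergent_is_glb(2)[OF conv(1)] phi_convergent_is_glb(2)[OF conv(2)]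
    by (rule is_glb_add)
  moreover have "(\<lambda>n. \<phi> (i n) + \<phi> (s n)) = (\<lambda>n. \<phi> (a n) + \<phi> (b n))"
    using modular in_L by (simp add: i_def s_def)
  ultimately have sum_glb: "\<exists>z. is_glb (range (\<lambda>n. \<phi> (i n) + \<phi> (s n))) z"
    by metis
  have "antimono (\<lambda>n. \<phi> (i n))" "antimono (\<lambda>n. \<phi> (s n))"
    using is_anti is_L mono_phi unfolding antimono_def by auto
  then have "(\<exists>u. is_glb (range (\<lambda>n. \<phi> (i n))) u) \<and> (\<exists>v. is_glb (range (\<lambda>n. \<phi> (s n))) v)"
    using R sum_glb unfolding R_complete_def by blast
  moreover have glb_i: "is_glb (range i) (inf p q)"
    unfolding i_def by (rule is_glb_inf[OF glb])
  moreover have glb_s: "is_glb (range s) (sup p q)"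
    unfolding s_def by (rule is_glb_sup[OF distr anti glb])
  ultimately have "phi_convergent L \<phi> i" "phi_convergent L \<phi> s"
    unfolding phi_convergent_def using is_L is_anti by blast+
  with glb_i glb_s show "inf p q \<in> PiL L \<phi>" "sup p q \<in> PiL L \<phi>"
    by (auto simp: mem_PiL_iff)
qed

lemma Pi_ext_prop_eq_on_L:
  assumes "Pi_ext_prop L \<phi> \<psi>" "a \<in> L"
  shows "\<psi> a = \<phi> a"
proof -
  have "\<psi> (Glb (range (\<lambda>_::nat. a))) = Glb (range (\<lambda>_::nat. \<phi> a))"
    using assms phi_convergent_const unfolding Pi_ext_prop_def by blast
  then show ?thesis by (simp add: Glb_eqI[OF is_glb_singleton])
qed

fun partial_inf :: "(nat \<Rightarrow> nat \<Rightarrow> 'v::lattice) \<Rightarrow> nat \<Rightarrow> nat \<Rightarrow> 'v" where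
  "partial_inf A 0 k = A 0 k"
| "partial_inf A (Suc j) k = inf (partial_inf A j k) (A (Suc j) k)"

lemma partial_inf_le: "n \<le> j \<Longrightarrow> partial_inf A j k \<le> A n k"
  by (induction j) (auto simp: le_Suc_eq intro: le_infI1)

lemma le_partial_inf: "(\<And>n. n \<le> j \<Longrightarrow> z \<le> A n k) \<Longrightarrow> z \<le> partial_inf A j k"
  by (induction j) auto

lemma partial_inf_mem: "sublattice L \<Longrightarrow> (\<And>n k. A n k \<in> L) \<Longrightarrow> partial_inf A j k \<in> L"
  by (induction j) (auto simp: sublattice_def)

lemma diagonal_partial_inf:
  fixes A :: "nat \<Rightarrow> nat \<Rightarrow> 'v::lattice"
  assumes anti_A: "\<And>n. antimono (A n)"
  defines "d \<equiv> \<lambda>k. partial_inf A k k"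
  shows "antimono d" and "d (max n k) \<le> A n k"
    and "\<lbrakk>antimono c; \<And>n k. c n \<le> A n k\<rbrakk> \<Longrightarrow> c k \<le> d k"
proof -
  show "antimono d" unfolding antimono_def d_def
  proof (intro allI impI le_partial_inf)
    fix k k' n :: nat assume "k \<le> k'" "n \<le> k"
    then have "partial_inf A k' k' \<le> A n k'" by (intro partial_inf_le) simp
    also have "\<dots> \<le> A n k" using anti_A \<open>k \<le> k'\<close> by (auto intro: antimonoD)
    finally show "partial_inf A k' k' \<le> A n k" .
  qed
  have "d (max n k) \<le> A n (max n k)" unfolding d_def by (rule partial_inf_le) simp
  also have "\<dots> \<le> A n k" using anti_A by (auto intro: antimonoD)
  finally show "d (max n k) \<le> A n k" .
  assume anti_c: "antimono c" and c_le_A: "\<And>n k. c n \<le> A n k"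
  show "c k \<le> d k" unfolding d_def
  proof (rule le_partial_inf)
    fix n assume "n \<le> k"
    then have "c k \<le> c n" by (rule antimonoD[OF anti_c])
    then show "c k \<le> A n k" using c_le_A[of n k] by (rule order.trans)
  qed
qed

lemma Pi_complete_PiL:
  fixes L :: "'v::lattice set" and \<phi> :: "'v \<Rightarrow> 'e::ordered_ab_group_add"
  assumes sub: "sublattice L" and val: "valuation L \<phi>" and ext: "Pi_ext_prop L \<phi> \<psi>"
  shows "Pi_complete (PiL L \<phi>) \<psi>"
  unfolding Pi_complete_def
proof (intro allI impI)
  fix c assume conv_c: "phi_convergent (PiL L \<phi>) \<psi> c"
  have c_PiL: "c n \<in> PiL L \<phi>" and anti_c: "antimono c" for n
    using conv_c unfolding phi_convergent_def by auto
  have mono_phi: "\<And>x y. x \<in> L \<Longrightarrow> y \<in> L \<Longrightarrow> x \<le> y \<Longrightarrow> \<phi> x \<le> \<phi> y"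
    using val unfolding valuation_def by auto
  have mono_psi: "\<And>x y. x \<in> PiL L \<phi> \<Longrightarrow> y \<in> PiL L \<phi> \<Longrightarrow> x \<le> y \<Longrightarrow> \<psi> x \<le> \<psi> y"
    and psi_Glb: "\<And>a. phi_convergent L \<phi> a \<Longrightarrow> \<psi> (Glb (range a)) = Glb (range (\<lambda>n. \<phi> (a n)))"
    using ext unfolding Pi_ext_prop_def valuation_def by auto
  have "\<forall>n. \<exists>a. phi_convergent L \<phi> a \<and> c n = Glb (range a)"
    using c_PiL unfolding PiL_def by blast
  then obtain A where conv_A: "\<And>n. phi_convergent L \<phi> (A n)"
    and c_eq: "\<And>n. c n = Glb (range (A n))"
    by metis
  have A_L: "A n k \<in> L" and anti_A: "antimono (A n)" for n k
    using conv_A unfolding phi_convergent_def by auto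
  have glb_A: "is_glb (range (A n)) (c n)"
    and glb_phi_A: "is_glb (range (\<lambda>k. \<phi> (A n k))) (\<psi> (c n))" for n
    using phi_convergent_is_glb[OF conv_A] psi_Glb[OF conv_A] c_eq by metis+
  define d where "d = (\<lambda>k. partial_inf A k k)"
  have d_L: "d k \<in> L" for k unfolding d_def using partial_inf_mem[OF sub] A_L by blast
  have anti_d: "antimono d" and d_below: "\<And>n k. d (max n k) \<le> A n k"
    using diagonal_partial_inf[of A, OF anti_A] unfolding d_def by blast+
  have "c n \<le> A n k" for n k
    using glb_A unfolding is_glb_def by auto
  then have c_le_d: "c k \<le> d k" for k
    unfolding d_def by (rule diagonal_partial_inf(3)[of A, OF anti_A anti_c])
  have "\<exists>m. d m \<le> A n k" for n k
    using d_below by blast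
  then have glb_d: "is_glb (range d) (Glb (range c))"
    by (rule is_glb_squeeze[OF glb_A phi_convergent_is_glb(1)[OF conv_c] c_le_d])
  have "\<psi> (c k) \<le> \<phi> (d k)" for k
  proof -
    have "\<psi> (c k) \<le> \<psi> (d k)"
      using mono_psi[OF c_PiL _ c_le_d] d_L subset_PiL by blast
    then show ?thesis by (simp add: Pi_ext_prop_eq_on_L[OF ext d_L])
  qed
  moreover have "\<exists>m. \<phi> (d m) \<le> \<phi> (A n k)" for n k
    using mono_phi[OF d_L A_L d_below] by blast
  ultimately have glb_phi_d: "is_glb (range (\<lambda>k. \<phi> (d k))) (Glb (range (\<lambda>n. \<psi> (c n))))"
    by (rule is_glb_squeeze[OF glb_phi_A phi_convergent_is_glb(2)[OF conv_c]])
  have conv_d: "phi_convergent L \<phi> d"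
    unfolding phi_convergent_def using d_L anti_d glb_d glb_phi_d by blast
  show "Glb (range c) \<in> PiL L \<phi> \<and> \<psi> (Glb (range c)) = Glb (range (\<lambda>n. \<psi> (c n)))"
    using conv_d glb_d psi_Glb[OF conv_d] Glb_eqI[OF glb_d] Glb_eqI[OF glb_phi_d]
    by (auto simp: mem_PiL_iff)
qed

theorem lemma5p4:
  fixes L :: "'v::lattice set" and \<phi> :: "'v \<Rightarrow> 'e::ordered_ab_group_add"
  assumes "valuation_system L \<phi>"
    and "Pi_extendible L \<phi>"
  shows "valuation_system (PiL L \<phi>) (Pi_phi L \<phi>) \<and> Pi_complete (PiL L \<phi>) (Pi_phi L \<phi>)"
proof -
  have ext: "Pi_ext_prop L \<phi> (Pi_phi L \<phi>)"
    using assms(2) unfolding Pi_extendible_def Pi_phi_def by (rule someI_ex)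
  have "sigma_distributive TYPE('v)" "sublattice L" "R_complete TYPE('e)" "valuation L \<phi>"
    using assms(1) unfolding valuation_system_def by auto
  moreover have "valuation (PiL L \<phi>) (Pi_phi L \<phi>)"
    using ext unfolding Pi_ext_prop_def by blast
  ultimately show ?thesis
    using sublattice_PiL[OF assms(1)] Pi_complete_PiL[OF _ _ ext]
    unfolding valuation_system_def by blast
qed

end
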